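(* Fix a partition $[n]=U\sqcup D$ and the associated map $\eta$ from $S_n$ to triangulations of $Q$ described below. Let $x,y\in S_n$ with $x\lessdot y$ (a cover in the weak order). Then the following are equivalent: (i) $\eta(x)=\eta(y)$; (ii) $x$ is obtained from $y$ by a $\bar{2}31\to\bar{2}13$-move or a $31\underline{2}\to13\underline{2}$-move. Furthermore, if $\eta(x)\neq\eta(y)$, then $\eta(x)$ and $\eta(y)$ differ by a diagonal flip, and the slope of the unique diagonal in $\eta(x)$ not in $\eta(y)$ is less than the slope of the unique diagonal in $\eta(y)$ not in $\eta(x)$.
   Context: $S_n$: permutations of $[n]$ in one-line notation $x=x_1\cdots x_n$; weak order $x\le y$ iff $I(x)\subseteq I(y)$, $I(x)=\{(x_j,x_i):i<j,x_i>x_j\}$; $x\lessdot y$ iff $y$ is obtained from $x$ by swapping two adjacent entries $x_j<x_{j+1}$. Indices in $U$ are "up", in $D$ "down". Let $y\in S_n$ and $1\le j\le n-1$ with $y_j>y_{j+1}$, and let $x$ be $y$ with the entries in positions $j,j+1$ swapped. This is a $\bar{2}31\to\bar{2}13$-move if there is $i<j$ with $y_{j+1}<y_i<y_j$ and $y_i\in U$; it is a $31\underline{2}\to13\underline{2}$-move if there is $k>j+1$ with $y_{j+1}<y_k<y_j$ and $y_k\in D$. Let $Q$ be a convex polygon in $\mathbb R^2$ with vertices $v_0,\dots,v_{n+1}$, $x$-coordinates strictly increasing with index, $v_0,v_{n+1}$ on the $x$-axis, $v_i$ above the axis for $i\in U$ and below for $i\in D$; slopes are measured in these coordinates. A diagonal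 is a segment between non-adjacent vertices; a triangulation is a maximal set of non-crossing diagonals; a diagonal flip removes a diagonal from a triangulation and inserts the other diagonal of the resulting quadrilateral. For $x\in S_n$, paths $\lambda_0(x),\dots,\lambda_n(x)$ from $v_0$ to $v_{n+1}$ visit vertices in increasing index: $\lambda_0(x)$ visits $v_0$, all $v_i$ with $i\in D$, and $v_{n+1}$; $\lambda_i(x)$ is $\lambda_{i-1}(x)$ with $v_{x_i}$ deleted if $x_i\in D$, added if $x_i\in U$. $\eta(x)$ is the set of diagonals of $Q$ occurring as edges of some $\lambda_i(x)$ (a triangulation). *)

theory Defs
  imports "HOL-Analysis.Analysis" "HOL-Combinatorics.Permutations"
begin

text \<open>Permutations of [n] in one-line notation: x :: nat => nat with x permutes {1..n};
  x i is the i-th entry.\<close>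

definition weak_cover :: "nat \<Rightarrow> (nat \<Rightarrow> nat) \<Rightarrow> (nat \<Rightarrow> nat) \<Rightarrow> bool" where
  "weak_cover n x y \<longleftrightarrow>
     (\<exists>j. 1 \<le> j \<and> j + 1 \<le> n \<and> x j < x (j+1) \<and> y = x(j := x (j+1), j+1 := x j))"

text \<open>x is obtained from y by a bar2 31 -> bar2 13 move.\<close>
definition move_231 :: "nat \<Rightarrow> nat set \<Rightarrow> (nat \<Rightarrow> nat) \<Rightarrow> (nat \<Rightarrow> nat) \<Rightarrow> bool" where
  "move_231 n U y x \<longleftrightarrow>
     (\<exists>j. 1 \<le> j \<and> j + 1 \<le> n \<and> y j > y (j+1) \<and> x = y(j := y (j+1), j+1 := y j) \<and>
        (\<exists>i. 1 \<le> i \<and> i < j \<and> y (j+1) < y i \<and> y i < y j \<and> y i \<in> U))"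

text \<open>x is obtained from y by a 31 underline2 -> 13 underline2 move.\<close>
definition move_312 :: "nat \<Rightarrow> nat set \<Rightarrow> (nat \<Rightarrow> nat) \<Rightarrow> (nat \<Rightarrow> nat) \<Rightarrow> bool" where
  "move_312 n D y x \<longleftrightarrow>
     (\<exists>j. 1 \<le> j \<and> j + 1 \<le> n \<and> y j > y (j+1) \<and> x = y(j := y (j+1), j+1 := y j) \<and>
        (\<exists>k. j + 1 < k \<and> k \<le> n \<and> y (j+1) < y k \<and> y k < y j \<and> y k \<in> D))"

definition polygon_Q :: "nat \<Rightarrow> nat set \<Rightarrow> nat set \<Rightarrow> (nat \<Rightarrow> real \<times> real) \<Rightarrow> bool" where
  "polygon_Q n U D v \<longleftrightarrow>
     (\<forall>i \<le> n+1. v i extreme_point_of (convex hull (v ` {0..n+1}))) \<and>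
     (\<forall>i j. i < j \<and> j \<le> n+1 \<longrightarrow> fst (v i) < fst (v j)) \<and>
     snd (v 0) = 0 \<and> snd (v (n+1)) = 0 \<and>
     (\<forall>i \<in> U. snd (v i) > 0) \<and> (\<forall>i \<in> D. snd (v i) < 0)"

definition is_diagonal :: "nat \<Rightarrow> (nat \<Rightarrow> real \<times> real) \<Rightarrow> nat \<times> nat \<Rightarrow> bool" where
  "is_diagonal n v d \<longleftrightarrow>
     (case d of (a, b) \<Rightarrow> a < b \<and> b \<le> n+1 \<and>
        \<not> (closed_segment (v a) (v b) face_of convex hull (v ` {0..n+1})))"

definition diag_cross :: "(nat \<Rightarrow> real \<times> real) \<Rightarrow> nat \<times> nat \<Rightarrow> nat \<times> nat \<Rightarrow> bool" where
  "diag_cross v d e \<longleftrightarrow> d \<noteq> e \<and>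
     open_segment (v (fst d)) (v (snd d)) \<inter> open_segment (v (fst e)) (v (snd e)) \<noteq> {}"

definition triangulation :: "nat \<Rightarrow> (nat \<Rightarrow> real \<times> real) \<Rightarrow> (nat \<times> nat) set \<Rightarrow> bool" where
  "triangulation n v T \<longleftrightarrow>
     (\<forall>d \<in> T. is_diagonal n v d) \<and>
     (\<forall>d \<in> T. \<forall>e \<in> T. \<not> diag_cross v d e) \<and>
     (\<forall>d. is_diagonal n v d \<and> d \<notin> T \<longrightarrow> (\<exists>e \<in> T. diag_cross v d e))"

definition diag_flip :: "nat \<Rightarrow> (nat \<Rightarrow> real \<times> real) \<Rightarrow> (nat \<times> nat) set \<Rightarrow> (nat \<times> nat) set \<Rightarrow> bool" where
  "diag_flip n v T T' \<longleftrightarrow> triangulation n v T \<and>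
     (\<exists>d d'. d \<in> T \<and> d' \<notin> T \<and> is_diagonal n v d' \<and>
        (\<forall>e \<in> T - {d}. \<not> diag_cross v d' e) \<and> T' = insert d' (T - {d}))"

definition slope :: "(nat \<Rightarrow> real \<times> real) \<Rightarrow> nat \<times> nat \<Rightarrow> real" where
  "slope v d = (snd (v (snd d)) - snd (v (fst d))) / (fst (v (snd d)) - fst (v (fst d)))"

text \<open>The paths lambda_i(x), as the sets of vertex indices they visit (in increasing order).\<close>
fun lam :: "nat \<Rightarrow> nat set \<Rightarrow> nat set \<Rightarrow> (nat \<Rightarrow> nat) \<Rightarrow> nat \<Rightarrow> nat set" where
  "lam n U D x 0 = {0} \<union> D \<union> {n+1}"
| "lam n U D x (Suc i) =
     (if x (Suc i) \<in> D then lam n U D x i - {x (Suc i)}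
      else if x (Suc i) \<in> U then lam n U D x i \<union> {x (Suc i)}
      else lam n U D x i)"

definition path_edges :: "nat set \<Rightarrow> (nat \<times> nat) set" where
  "path_edges S = {(a, b). a \<in> S \<and> b \<in> S \<and> a < b \<and> (\<forall>c \<in> S. \<not> (a < c \<and> c < b))}"

definition eta :: "nat \<Rightarrow> nat set \<Rightarrow> nat set \<Rightarrow> (nat \<Rightarrow> real \<times> real) \<Rightarrow> (nat \<Rightarrow> nat) \<Rightarrow> (nat \<times> nat) set" where
  "eta n U D v x = {d. is_diagonal n v d \<and> (\<exists>i \<le> n. d \<in> path_edges (lam n U D x i))}"

end

theory Submission
  imports Defs
begin

text \<open>
  As the vertices of \<open>Q\<close> are in convex position with increasing \<open>x\<close>-coordinates, whether a
  vertex lies above the line through two others is decided by the side (\<open>U\<close> or \<open>D\<close>) of the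
  middle one of the three; so two diagonals cross iff their endpoints alternate combinatorially,
  and everything reduces to combinatorics of the index sets.

  The path \<open>\<lambda>\<^sub>i(x)\<close> visits \<open>{0, n + 1} \<union> (D - P) \<union> (U \<inter> P)\<close> for \<open>P = {x\<^sub>1, \<dots>, x\<^sub>i}\<close>.
  Since these prefix sets are nested, edges of different paths never cross; sweeping the paths
  from the lower to the upper boundary of \<open>Q\<close> shows that every other chord is crossed by one of
  them, so \<open>\<eta>(x)\<close> is a triangulation.

  If \<open>y\<close> arises from \<open>x\<close> by swapping the ascent \<open>\<alpha> = x\<^sub>j < \<beta> = x\<^sub>j\<^sub>+\<^sub>1\<close>, only \<open>\<lambda>\<^sub>j\<close>
  changes, from the path over \<open>P \<union> {\<alpha>}\<close> to the one over \<open>P \<union> {\<beta>}\<close>, where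
  \<open>P = {x\<^sub>1, \<dots>, x\<^sub>j\<^sub>-\<^sub>1}\<close>. If the path over \<open>P\<close> has a vertex strictly between \<open>\<alpha>\<close> and
  \<open>\<beta>\<close> (which is what the two moves say), every edge of both is already an edge of
  \<open>\<lambda>\<^sub>j\<^sub>-\<^sub>1\<close> or \<open>\<lambda>\<^sub>j\<^sub>+\<^sub>1\<close>. Otherwise each of them has exactly one new edge, the one spanning
  \<open>[\<alpha>, \<beta>]\<close>; these two edges are the diagonals of the quadrilateral formed by \<open>\<alpha>\<close>, \<open>\<beta>\<close>
  and the two neighbours of the gap, and the one of \<open>x\<close> is the less steep.
\<close>

section \<open>Orientation in the plane\<close>

text \<open>Twice the signed area of the triangle \<open>P Q R\<close>: positive iff \<open>R\<close> lies to the left of the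
  line from \<open>P\<close> to \<open>Q\<close>.\<close>
definition orient :: "real \<times> real \<Rightarrow> real \<times> real \<Rightarrow> real \<times> real \<Rightarrow> real" where
  "orient P Q R = (fst Q - fst P) * (snd R - snd P) - (snd Q - snd P) * (fst R - fst P)"

lemma orient_rotate: "orient P Q R = orient Q R P"
  unfolding orient_def by (simp add: algebra_simps)

lemma orient_swap: "orient P Q R = - orient Q P R"
  unfolding orient_def by (simp add: algebra_simps)

lemma orient_convex_combination:
  "orient A B ((1 - t) *\<^sub>R C + t *\<^sub>R D) = (1 - t) * orient A B C + t * orient A B D"
  unfolding orient_def by (simp add: algebra_simps)

lemma orient_closed_segment: "X \<in> closed_segment A B \<Longrightarrow> orient A B X = 0"
  by (auto simp: in_segment orient_convex_combination) (simp add: orient_def)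

lemma orient_on_vertical_line:
  fixes P Q :: "real \<times> real"
  assumes "fst P < t" "t < fst Q"
  obtains R where "R \<in> open_segment P Q" "fst R = t"
    "\<And>X. fst X = t \<Longrightarrow> orient P Q X = (fst Q - fst P) * (snd X - snd R)"
proof
  define u where "u = (t - fst P) / (fst Q - fst P)"
  have u: "0 < u" "u < 1" "u * (fst Q - fst P) = t - fst P"
    using assms unfolding u_def by (auto simp: divide_simps)
  show "(1 - u) *\<^sub>R P + u *\<^sub>R Q \<in> open_segment P Q"
    using u assms by (auto simp: in_segment)
  show "fst ((1 - u) *\<^sub>R P + u *\<^sub>R Q) = t"
    using u by (simp add: algebra_simps)
  show "orient P Q X = (fst Q - fst P) * (snd X - snd ((1 - u) *\<^sub>R P + u *\<^sub>R Q))"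
    if "fst X = t" for X
  proof -
    have "(fst Q - fst P) * (snd X - snd ((1 - u) *\<^sub>R P + u *\<^sub>R Q))
        = (fst Q - fst P) * (snd X - snd P) - (u * (fst Q - fst P)) * (snd Q - snd P)"
      by (simp add: algebra_simps)
    also have "\<dots> = orient P Q X"
      unfolding u(3) orient_def using that by (simp add: algebra_simps)
    finally show ?thesis by simp
  qed
qed

lemma open_segment_vertical:
  fixes P Q X :: "real \<times> real"
  assumes "fst P = fst X" "fst Q = fst X" "snd P < snd X" "snd X < snd Q"
  shows "X \<in> open_segment P Q"
proof -
  define u where "u = (snd X - snd P) / (snd Q - snd P)"
  have u: "0 < u" "u < 1" "u * (snd Q - snd P) = snd X - snd P"
    using assms unfolding u_def by (auto simp: divide_simps)
  then have "X = (1 - u) *\<^sub>R P + u *\<^sub>R Q"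
    using assms by (simp add: prod_eq_iff algebra_simps)
  moreover have "P \<noteq> Q" using assms by auto
  ultimately show ?thesis using u unfolding in_segment by blast
qed

lemma mult_neg_if_convex_combination_zero:
  fixes a b t :: real
  assumes "0 < t" "t < 1" "(1 - t) * a + t * b = 0" "a \<noteq> 0"
  shows "a * b < 0"
proof -
  have "t * (a * b) = - ((1 - t) * (a * a))"
    using arg_cong[OF assms(3), of "(*) a"] by (simp add: algebra_simps)
  moreover have "0 < a * a" using assms(4) not_real_square_gt_zero by blast
  then have "(1 - t) * (a * a) > 0" using assms(2) by simp
  ultimately have "t * (a * b) < 0" by linarith
  then show ?thesis using assms(1) by (smt (verit) mult_nonneg_nonneg)
qed

lemma open_segments_disjoint_common_endpoint:
  assumes "orient X B D \<noteq> 0"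
  shows "open_segment X B \<inter> open_segment X D = {}"
proof (rule ccontr)
  assume "open_segment X B \<inter> open_segment X D \<noteq> {}"
  then obtain p where p: "p \<in> open_segment X B" "p \<in> open_segment X D" by blast
  obtain t where t: "0 < t" "p = (1 - t) *\<^sub>R X + t *\<^sub>R D"
    using p(2) by (auto simp: in_segment)
  have "orient X B p = 0" using p(1) open_closed_segment orient_closed_segment by blast
  then have "t * orient X B D = 0" by (simp add: t orient_convex_combination) (simp add: orient_def)
  then show False using t assms by simp
qed

lemma orient_opposite_if_open_segments_meet:
  assumes "p \<in> open_segment A B" "p \<in> open_segment C D" "orient A B C \<noteq> 0"
  shows "orient A B C * orient A B D < 0"
proof -
  obtain t where t: "0 < t" "t < 1" "p = (1 - t) *\<^sub>R C + t *\<^sub>R D"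
    using assms(2) by (auto simp: in_segment)
  have "orient A B p = 0" using assms(1) open_closed_segment orient_closed_segment by blast
  then show ?thesis
    using mult_neg_if_convex_combination_zero[OF t(1,2) _ assms(3)]
    by (simp add: t(3) orient_convex_combination)
qed

lemma weighted_point_in_open_segment:
  fixes C D :: "'a::real_vector"
  assumes "\<alpha> * \<beta> < 0" "C \<noteq> D"
  shows "(\<beta> / (\<beta> - \<alpha>)) *\<^sub>R C - (\<alpha> / (\<beta> - \<alpha>)) *\<^sub>R D \<in> open_segment C D"
proof -
  define t where "t = - \<alpha> / (\<beta> - \<alpha>)"
  have "\<beta> - \<alpha> \<noteq> 0" using assms(1) by auto
  then have "1 - t = \<beta> / (\<beta> - \<alpha>)" unfolding t_def by (simp add: field_simps)
  moreover have "0 < t" "t < 1"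
    using assms(1) unfolding t_def by (auto simp: mult_less_0_iff divide_simps)
  ultimately show ?thesis
    using assms(2) unfolding in_segment by (intro conjI exI[of _ t]) (auto simp: t_def)
qed

text \<open>The common point is found explicitly: with \<open>\<alpha>, \<beta>, \<gamma>, \<delta>\<close> the four orientations,
  the identities \<open>\<beta> - \<alpha> = \<gamma> - \<delta>\<close> and \<open>\<beta> C - \<alpha> D = \<gamma> B - \<delta> A\<close> hold.\<close>
lemma open_segments_meet_if_orient_opposite:
  assumes "orient A B C * orient A B D < 0" "orient C D A * orient C D B < 0"
  shows "open_segment A B \<inter> open_segment C D \<noteq> {}"
proof -
  define \<alpha> where "\<alpha> = orient A B C"
  define \<beta> where "\<beta> = orient A B D"
  define \<gamma> where "\<gamma> = orient C D A"
  define \<delta> where "\<delta> = orient C D B"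
  have opposite: "\<alpha> * \<beta> < 0" "- \<gamma> * - \<delta> < 0"
    using assms unfolding \<alpha>_def \<beta>_def \<gamma>_def \<delta>_def by auto
  have k: "\<beta> - \<alpha> = - \<delta> - - \<gamma>" "\<beta> - \<alpha> \<noteq> 0"
    using opposite(1) not_square_less_zero[of \<alpha>] apply auto
    by (simp add: \<alpha>_def \<beta>_def \<gamma>_def \<delta>_def orient_def algebra_simps)
  have "A \<noteq> B" "C \<noteq> D" using assms by (auto simp: orient_def)
  note in_CD = weighted_point_in_open_segment[OF opposite(1) \<open>C \<noteq> D\<close>]
  note in_AB = weighted_point_in_open_segment[OF opposite(2) \<open>A \<noteq> B\<close>]
  have "\<beta> *\<^sub>R C - \<alpha> *\<^sub>R D = (- \<delta>) *\<^sub>R A - (- \<gamma>) *\<^sub>R B"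
    unfolding \<alpha>_def \<beta>_def \<gamma>_def \<delta>_def orient_def by (simp add: prod_eq_iff algebra_simps)
  then have "(\<beta> / (\<beta> - \<alpha>)) *\<^sub>R C - (\<alpha> / (\<beta> - \<alpha>)) *\<^sub>R D
      = (- \<delta> / (- \<delta> - - \<gamma>)) *\<^sub>R A - (- \<gamma> / (- \<delta> - - \<gamma>)) *\<^sub>R B"
    unfolding k(1)[symmetric] divide_inverse mult.commute[of _ "inverse _"]
    by (simp only: scaleR_scaleR[symmetric] scaleR_diff_right[symmetric])
  then show ?thesis using in_AB in_CD by auto
qed

lemma open_segments_meet_iff_orient:
  assumes "orient A B C \<noteq> 0" "orient C D A \<noteq> 0"
  shows "open_segment A B \<inter> open_segment C D \<noteq> {} \<longleftrightarrow>
    orient A B C * orient A B D < 0 \<and> orient C D A * orient C D B < 0"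
  using orient_opposite_if_open_segments_meet[of _ A B C D]
    orient_opposite_if_open_segments_meet[of _ C D A B]
    open_segments_meet_if_orient_opposite assms by blast

lemma mult_less_0_iff_sgn:
  fixes x y :: real
  shows "x * y < 0 \<longleftrightarrow> sgn x * sgn y = -1"
  by (auto simp: sgn_if mult_less_0_iff)

section \<open>Crossing chords of the polygon\<close>

text \<open>Whether vertex \<open>c\<close> lies above the line through \<open>v a\<close> and \<open>v b\<close> (\<open>a < b\<close>): in convex
  position this is decided by the side of whichever of \<open>a, b, c\<close> is the middle one.\<close>
definition above :: "nat set \<Rightarrow> nat set \<Rightarrow> nat \<Rightarrow> nat \<Rightarrow> nat \<Rightarrow> bool" where
  "above U D a b c \<longleftrightarrow> (c < a \<and> a \<in> D) \<or> (a < c \<and> c < b \<and> c \<in> U) \<or> (b < c \<and> b \<in> D)"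

text \<open>Around \<open>Q\<close> the vertices occur in the cyclic order \<open>0\<close>, \<open>U\<close> ascending, \<open>n + 1\<close>,
  \<open>D\<close> descending, and two chords cross iff their endpoints alternate in this order.
  \<open>cross_pattern\<close> lists the alternating configurations in which the chord \<open>(c, d)\<close> starts
  strictly inside the span of \<open>(a, b)\<close>.\<close>
definition cross_pattern :: "nat set \<Rightarrow> nat \<Rightarrow> nat \<Rightarrow> nat \<Rightarrow> nat \<Rightarrow> bool" where
  "cross_pattern U a b c d \<longleftrightarrow>
     (a < c \<and> c < b \<and> b < d \<and> (b \<in> U \<longleftrightarrow> c \<in> U)) \<or>
     (a < c \<and> c < d \<and> d < b \<and> (c \<in> U \<longleftrightarrow> d \<notin> U))"

definition chords_cross :: "nat set \<Rightarrow> nat \<times> nat \<Rightarrow> nat \<times> nat \<Rightarrow> bool" where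
  "chords_cross U d e \<longleftrightarrow>
     cross_pattern U (fst d) (snd d) (fst e) (snd e) \<or>
     cross_pattern U (fst e) (snd e) (fst d) (snd d)"

lemma chords_cross_commute: "chords_cross U d e \<longleftrightarrow> chords_cross U e d"
  unfolding chords_cross_def by blast

lemma chords_cross_distinct_endpoints:
  "chords_cross U (a, b) (c, d) \<Longrightarrow> a \<noteq> c \<and> a \<noteq> d \<and> b \<noteq> c \<and> b \<noteq> d"
  unfolding chords_cross_def cross_pattern_def by auto

locale vertex_partition =
  fixes n :: nat and U D :: "nat set"
  assumes partition: "U \<union> D = {1..n}" and disjoint: "U \<inter> D = {}"
begin

lemma U_range: "c \<in> U \<Longrightarrow> 1 \<le> c \<and> c \<le> n"
  using partition by auto

lemma D_range: "c \<in> D \<Longrightarrow> 1 \<le> c \<and> c \<le> n"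
  using partition by auto

lemma vertex_cases: "c \<le> n + 1 \<Longrightarrow> c = 0 \<or> c = n + 1 \<or> c \<in> U \<or> c \<in> D"
  using partition by force

lemma notin_U_iff_in_D: "1 \<le> c \<Longrightarrow> c \<le> n \<Longrightarrow> c \<notin> U \<longleftrightarrow> c \<in> D"
  using partition disjoint by auto

lemma chords_cross_iff_separated:
  assumes "a < b" "b \<le> n + 1" "c < d" "d \<le> n + 1" "a \<noteq> c" "a \<noteq> d" "b \<noteq> c" "b \<noteq> d"
  shows "chords_cross U (a, b) (c, d) \<longleftrightarrow>
    above U D a b c \<noteq> above U D a b d \<and> above U D c d a \<noteq> above U D c d b"
proof -
  have side: "z \<in> D \<longleftrightarrow> z \<notin> U" if "0 < z" "z \<le> n" for z
    using notin_U_iff_in_D that by auto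
  consider "a < c" "c < b" "b < d" | "a < c" "d < b" | "b < c" | "c < a" "a < d" "d < b"
    | "c < a" "b < d" | "d < a"
    using assms by linarith
  then show ?thesis
    by cases (use assms side[of a] side[of b] side[of c] side[of d] in
        \<open>auto simp: above_def chords_cross_def cross_pattern_def\<close>)
qed

end

locale polygon = vertex_partition +
  fixes v :: "nat \<Rightarrow> real \<times> real"
  assumes convex_position: "polygon_Q n U D v"
begin

lemma fst_vertex_less: "i < j \<Longrightarrow> j \<le> n + 1 \<Longrightarrow> fst (v i) < fst (v j)"
  using convex_position unfolding polygon_Q_def by auto

lemma snd_vertex_0: "snd (v 0) = 0" and snd_vertex_last: "snd (v (n + 1)) = 0"
  using convex_position unfolding polygon_Q_def by auto

lemma sgn_snd_vertex: "1 \<le> c \<Longrightarrow> c \<le> n \<Longrightarrow> sgn (snd (v c)) = (if c \<in> U then 1 else -1)"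
  using convex_position notin_U_iff_in_D unfolding polygon_Q_def by auto

lemma vertex_notin_open_segment:
  assumes "q \<le> n + 1" "X \<in> convex hull (v ` {0..n+1})" "Y \<in> convex hull (v ` {0..n+1})"
  shows "v q \<notin> open_segment X Y"
  using convex_position assms unfolding polygon_Q_def extreme_point_of_def by blast

lemma open_segment_vertices_in_hull:
  "i \<le> n + 1 \<Longrightarrow> j \<le> n + 1 \<Longrightarrow> open_segment (v i) (v j) \<subseteq> convex hull (v ` {0..n+1})"
proof -
  assume "i \<le> n + 1" "j \<le> n + 1"
  then have "v i \<in> convex hull (v ` {0..n+1})" "v j \<in> convex hull (v ` {0..n+1})"
    by (auto intro: hull_inc)
  then show ?thesis by (meson convex_contains_open_segment convex_convex_hull)
qed

text \<open>The vertical line through \<open>v q\<close> meets the chord in \<open>R\<close> and the \<open>x\<close>-axis in a point \<open>B\<close>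
  of the hull; as an extreme point, \<open>v q\<close> cannot lie between them.\<close>
lemma sgn_orient_middle_vertex:
  assumes "p < q" "q < r" "r \<le> n + 1"
  shows "sgn (orient (v p) (v r) (v q)) = sgn (snd (v q))"
proof -
  have x: "fst (v p) < fst (v q)" "fst (v q) < fst (v r)"
    using assms by (auto intro: fst_vertex_less)
  obtain R where R: "R \<in> open_segment (v p) (v r)" "fst R = fst (v q)"
    and orient: "orient (v p) (v r) (v q) = (fst (v r) - fst (v p)) * (snd (v q) - snd R)"
    using orient_on_vertical_line[OF x] by metis
  have "fst (v 0) < fst (v q)" "fst (v q) < fst (v (n + 1))"
    using assms by (auto intro: fst_vertex_less)
  then obtain B where B: "B \<in> open_segment (v 0) (v (n + 1))" "fst B = fst (v q)"
    by (rule orient_on_vertical_line)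
  have "snd B = 0" using B(1) snd_vertex_0 snd_vertex_last by (auto simp: in_segment)
  have hull: "R \<in> convex hull (v ` {0..n+1})" "B \<in> convex hull (v ` {0..n+1})"
    using R(1) B(1) open_segment_vertices_in_hull[of p r]
      open_segment_vertices_in_hull[of 0 "n + 1"] assms by auto
  have "v q \<noteq> R"
    using R(1) vertex_notin_open_segment[of q "v p" "v r"] assms by (auto simp: hull_inc)
  then have "snd (v q) \<noteq> snd R" using R(2) by (simp add: prod_eq_iff)
  moreover have "snd (v q) \<noteq> 0" using sgn_snd_vertex[of q] assms by (auto split: if_splits)
  moreover have "v q \<notin> open_segment R B" "v q \<notin> open_segment B R"
    using vertex_notin_open_segment hull assms by auto
  ultimately have "0 < snd (v q) - snd R \<longleftrightarrow> 0 < snd (v q)"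
    using open_segment_vertical[of R "v q" B] open_segment_vertical[of B "v q" R] R(2) B(2)
      \<open>snd B = 0\<close>
    by (smt (verit))
  then have "sgn (snd (v q) - snd R) = sgn (snd (v q))"
    using \<open>snd (v q) \<noteq> snd R\<close> \<open>snd (v q) \<noteq> 0\<close> by (simp add: sgn_if)
  then show ?thesis using orient x by (simp add: sgn_mult)
qed

lemma sgn_orient_above:
  assumes "a < b" "b \<le> n + 1" "c \<le> n + 1" "c \<noteq> a" "c \<noteq> b"
  shows "sgn (orient (v a) (v b) (v c)) = (if above U D a b c then 1 else -1)"
proof -
  consider "c < a" | "a < c" "c < b" | "b < c" using assms by linarith
  then show ?thesis
  proof cases
    case 1
    have "orient (v a) (v b) (v c) = - orient (v c) (v b) (v a)"
      by (metis orient_rotate orient_swap)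
    then show ?thesis using 1 assms sgn_orient_middle_vertex[of c a b] sgn_snd_vertex[of a]
      notin_U_iff_in_D[of a] by (auto simp: above_def)
  next
    case 2
    then show ?thesis using assms sgn_orient_middle_vertex[of a c b] sgn_snd_vertex[of c]
      notin_U_iff_in_D[of c] by (auto simp: above_def)
  next
    case 3
    have "orient (v a) (v b) (v c) = - orient (v a) (v c) (v b)"
      by (metis orient_rotate orient_swap)
    then show ?thesis using 3 assms sgn_orient_middle_vertex[of a b c] sgn_snd_vertex[of b]
      notin_U_iff_in_D[of b] by (auto simp: above_def)
  qed
qed

lemma orient_vertices_nonzero:
  assumes "i \<le> n + 1" "j \<le> n + 1" "k \<le> n + 1" "i \<noteq> j" "j \<noteq> k" "i \<noteq> k"
  shows "orient (v i) (v j) (v k) \<noteq> 0"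
proof (cases "i < j")
  case True
  then show ?thesis using sgn_orient_above[of i j k] assms by (auto split: if_splits)
next
  case False
  then show ?thesis using sgn_orient_above[of j i k] assms orient_swap[of "v i" "v j" "v k"]
    by (auto split: if_splits)
qed

lemma open_segments_disjoint_common_vertex:
  assumes "i \<le> n + 1" "j \<le> n + 1" "k \<le> n + 1" "i \<noteq> j" "j \<noteq> k" "i \<noteq> k"
  shows "open_segment (v i) (v j) \<inter> open_segment (v i) (v k) = {}"
  using open_segments_disjoint_common_endpoint orient_vertices_nonzero assms by blast

lemma diag_cross_iff_chords_cross:
  assumes "a < b" "b \<le> n + 1" "c < d" "d \<le> n + 1"
  shows "diag_cross v (a, b) (c, d) \<longleftrightarrow> chords_cross U (a, b) (c, d)"
proof (cases "a \<noteq> c \<and> a \<noteq> d \<and> b \<noteq> c \<and> b \<noteq> d")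
  case True
  have "diag_cross v (a, b) (c, d) \<longleftrightarrow>
      orient (v a) (v b) (v c) * orient (v a) (v b) (v d) < 0 \<and>
      orient (v c) (v d) (v a) * orient (v c) (v d) (v b) < 0"
    unfolding diag_cross_def using open_segments_meet_iff_orient orient_vertices_nonzero True assms
    by auto
  also have "\<dots> \<longleftrightarrow> above U D a b c \<noteq> above U D a b d \<and> above U D c d a \<noteq> above U D c d b"
    unfolding mult_less_0_iff_sgn using sgn_orient_above True assms by auto
  finally show ?thesis using chords_cross_iff_separated True assms by simp
next
  case False
  have "open_segment (v a) (v b) \<inter> open_segment (v c) (v d) = {}" if "(a, b) \<noteq> (c, d)"
    using False that open_segments_disjoint_common_vertex[of a b d]
      open_segments_disjoint_common_vertex[of a b c] open_segments_disjoint_common_vertex[of b a d]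
      open_segments_disjoint_common_vertex[of b a c] assms
    by (auto simp: open_segment_commute)
  moreover have "\<not> chords_cross U (a, b) (c, d)"
    using False chords_cross_distinct_endpoints by blast
  ultimately show ?thesis unfolding diag_cross_def by auto
qed

lemma slope_less_if_separated:
  assumes "a < b" "b \<le> n + 1" "c < e" "e \<le> n + 1" "c \<notin> {a, b}" "e \<notin> {a, b}"
    and "above U D a b e" "\<not> above U D a b c"
  shows "slope v (a, b) < slope v (c, e)"
proof -
  have "orient (v a) (v b) (v e) > 0" "orient (v a) (v b) (v c) < 0"
    using sgn_orient_above[of a b e] sgn_orient_above[of a b c] assms
    by (auto simp: sgn_if split: if_splits)
  moreover have "fst (v b) - fst (v a) > 0" "fst (v e) - fst (v c) > 0"
    using fst_vertex_less assms by auto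
  moreover have "(snd (v e) - snd (v c)) * (fst (v b) - fst (v a))
      - (snd (v b) - snd (v a)) * (fst (v e) - fst (v c))
     = orient (v a) (v b) (v e) - orient (v a) (v b) (v c)"
    unfolding orient_def by (simp add: algebra_simps)
  ultimately show ?thesis unfolding slope_def by (simp add: divide_simps)
qed

end

section \<open>The paths \<open>\<lambda>\<^sub>i(x)\<close>\<close>

definition path_vertices :: "nat \<Rightarrow> nat set \<Rightarrow> nat set \<Rightarrow> nat set \<Rightarrow> nat set" where
  "path_vertices n U D P = {0, n + 1} \<union> (D - P) \<union> (U \<inter> P)"

definition lam_edges :: "nat \<Rightarrow> nat set \<Rightarrow> nat set \<Rightarrow> (nat \<Rightarrow> nat) \<Rightarrow> (nat \<times> nat) set" where
  "lam_edges n U D x = (\<Union>i \<le> n. path_edges (lam n U D x i))"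

definition boundary_edges :: "nat \<Rightarrow> nat set \<Rightarrow> nat set \<Rightarrow> (nat \<times> nat) set" where
  "boundary_edges n U D = path_edges ({0, n + 1} \<union> U) \<union> path_edges ({0, n + 1} \<union> D)"

lemma eta_eq_lam_edges: "eta n U D v x = {d \<in> lam_edges n U D x. is_diagonal n v d}"
  unfolding eta_def lam_edges_def by auto

lemma lam_first: "lam n U D x 0 = {0, n + 1} \<union> D"
  by (simp add: insert_commute)

lemma path_edges_lam_subset: "i \<le> n \<Longrightarrow> path_edges (lam n U D x i) \<subseteq> lam_edges n U D x"
  unfolding lam_edges_def by blast

lemma path_edges_iff:
  "(a, b) \<in> path_edges S \<longleftrightarrow> a \<in> S \<and> b \<in> S \<and> a < b \<and> (\<forall>c\<in>S. \<not> (a < c \<and> c < b))"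
  unfolding path_edges_def by auto

lemma path_edges_cong:
  assumes "\<And>c. a \<le> c \<Longrightarrow> c \<le> b \<Longrightarrow> c \<in> S \<longleftrightarrow> c \<in> S'"
  shows "(a, b) \<in> path_edges S \<longleftrightarrow> (a, b) \<in> path_edges S'"
  using assms unfolding path_edges_iff by (metis less_imp_le order_refl)

lemma path_edges_bounded: "S \<subseteq> {0..m} \<Longrightarrow> (a, b) \<in> path_edges S \<Longrightarrow> a < b \<and> b \<le> m"
  unfolding path_edges_def by auto

lemma path_edges_split_at:
  assumes "(p, q) \<in> path_edges (L - {w})" "p < w" "w < q"
  shows "(p, w) \<in> path_edges (insert w L)" "(w, q) \<in> path_edges (insert w L)"
  using assms unfolding path_edges_iff by auto

lemma obtain_path_edge_over:
  fixes L :: "nat set"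
  assumes "0 \<in> L" "m \<in> L" "0 < w" "w < m"
  obtains p q where "p < w" "w < q" "(p, q) \<in> path_edges (L - {w})"
proof -
  define p where "p = Max {c \<in> L. c < w}"
  define q where "q = (LEAST c. c \<in> L \<and> w < c)"
  have fin: "finite {c \<in> L. c < w}" by simp
  have "0 \<in> {c \<in> L. c < w}" using assms by simp
  then have p: "p < w" "p \<in> L" and max_below: "\<And>c. c \<in> L \<Longrightarrow> c < w \<Longrightarrow> c \<le> p"
    unfolding p_def using Max_in[OF fin] Max_ge[OF fin] by blast+
  have q: "w < q" "q \<in> L" and min_above: "\<And>c. c \<in> L \<Longrightarrow> w < c \<Longrightarrow> q \<le> c"
    unfolding q_def using LeastI[of "\<lambda>c. c \<in> L \<and> w < c" m] assms by (auto intro: Least_le)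
  have "\<not> (p < c \<and> c < q)" if "c \<in> L - {w}" for c
    using that max_below[of c] min_above[of c] by (cases "c < w") auto
  then have "(p, q) \<in> path_edges (L - {w})"
    unfolding path_edges_iff using p q by auto
  then show ?thesis using that p q by blast
qed

text \<open>Combinatorial form of ``the chord \<open>(a, b)\<close> nowhere passes below the path through \<open>L\<close>''.\<close>
definition chord_weakly_above :: "nat set \<Rightarrow> nat set \<Rightarrow> nat \<Rightarrow> nat \<Rightarrow> nat set \<Rightarrow> bool" where
  "chord_weakly_above U D a b L \<longleftrightarrow>
     (\<forall>c\<in>L. a < c \<and> c < b \<longrightarrow> c \<in> D) \<and> (a \<in> L \<or> a \<in> U) \<and> (b \<in> L \<or> b \<in> U)"

context vertex_partition
begin

lemma mem_path_vertices:
  "1 \<le> c \<Longrightarrow> c \<le> n \<Longrightarrow> c \<in> path_vertices n U D P \<longleftrightarrow> (c \<in> U \<longleftrightarrow> c \<in> P)"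
  unfolding path_vertices_def using notin_U_iff_in_D by auto

lemma path_vertices_subset: "path_vertices n U D P \<subseteq> {0..n+1}"
  unfolding path_vertices_def by (auto dest: U_range D_range)

lemma path_vertices_all: "path_vertices n U D {1..n} = {0, n + 1} \<union> U"
  unfolding path_vertices_def using partition by auto

lemma lam_eq_path_vertices:
  assumes "x permutes {1..n}" "i \<le> n"
  shows "lam n U D x i = path_vertices n U D (x ` {1..i})"
  using assms(2)
proof (induction i)
  case 0
  then show ?case by (simp add: path_vertices_def insert_commute)
next
  case (Suc i)
  have range: "x (Suc i) \<in> {1..n}" using permutes_in_image[OF assms(1)] Suc.prems by simp
  then have "x (Suc i) \<in> U \<longleftrightarrow> x (Suc i) \<notin> D" using notin_U_iff_in_D by auto
  moreover have "x ` {1..Suc i} = insert (x (Suc i)) (x ` {1..i})"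
    by (simp add: atLeastAtMostSuc_conv)
  ultimately show ?case using Suc range by (auto simp: path_vertices_def)
qed

lemma lam_last: "x permutes {1..n} \<Longrightarrow> lam n U D x n = {0, n + 1} \<union> U"
  using lam_eq_path_vertices[of x n] permutes_image[of x "{1..n}"] path_vertices_all by simp

lemma lam_edges_chord: "x permutes {1..n} \<Longrightarrow> (a, b) \<in> lam_edges n U D x \<Longrightarrow> a < b \<and> b \<le> n + 1"
  unfolding lam_edges_def
  using lam_eq_path_vertices path_edges_bounded[OF path_vertices_subset] by fastforce

lemma boundary_edges_subset_lam_edges:
  "x permutes {1..n} \<Longrightarrow> boundary_edges n U D \<subseteq> lam_edges n U D x"
  unfolding boundary_edges_def lam_edges_def using lam_first lam_last
  by (metis (no_types, lifting) UN_upper Un_least atMost_iff le0 order_refl)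

section \<open>\<open>\<eta>(x)\<close> is a triangulation\<close>

lemma not_cross_pattern_nested_paths:
  assumes "(a, b) \<in> path_edges (path_vertices n U D P)"
    and "(c, d) \<in> path_edges (path_vertices n U D Q)"
    and "P \<subseteq> Q \<or> Q \<subseteq> P"
  shows "\<not> cross_pattern U a b c d"
proof
  assume pattern: "cross_pattern U a b c d"
  have bounds: "b \<le> n + 1" "d \<le> n + 1"
    using assms(1,2) path_edges_bounded[OF path_vertices_subset] by blast+
  have mem: "z \<in> path_vertices n U D R \<longleftrightarrow> (z \<in> U \<longleftrightarrow> z \<in> R)" if "0 < z" "z \<le> n" for z R
    using mem_path_vertices that by simp
  from pattern show False
    unfolding cross_pattern_def
  proof (elim disjE conjE)
    assume "a < c" "c < b" "b < d" "b \<in> U \<longleftrightarrow> c \<in> U"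
    moreover have "b \<in> path_vertices n U D P" "c \<notin> path_vertices n U D P"
      "c \<in> path_vertices n U D Q" "b \<notin> path_vertices n U D Q"
      using assms(1,2) \<open>a < c\<close> \<open>c < b\<close> \<open>b < d\<close> unfolding path_edges_iff by auto
    ultimately show False using assms(3) bounds mem[of b] mem[of c] by auto
  next
    assume "a < c" "c < d" "d < b" "c \<in> U \<longleftrightarrow> d \<notin> U"
    moreover have "c \<notin> path_vertices n U D P" "d \<notin> path_vertices n U D P"
      "c \<in> path_vertices n U D Q" "d \<in> path_vertices n U D Q"
      using assms(1,2) \<open>a < c\<close> \<open>c < d\<close> \<open>d < b\<close> unfolding path_edges_iff by auto
    ultimately show False using assms(3) bounds mem[of c] mem[of d] by auto
  qed
qed

lemma not_chords_cross_nested_paths: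
  assumes "(a, b) \<in> path_edges (path_vertices n U D P)"
    and "(c, d) \<in> path_edges (path_vertices n U D Q)"
    and "P \<subseteq> Q \<or> Q \<subseteq> P"
  shows "\<not> chords_cross U (a, b) (c, d)"
  using not_cross_pattern_nested_paths[OF assms] not_cross_pattern_nested_paths[OF assms(2,1)]
    assms(3)
  unfolding chords_cross_def by auto

lemma lam_edges_not_cross:
  assumes "x permutes {1..n}" "d \<in> lam_edges n U D x" "e \<in> lam_edges n U D x"
  shows "\<not> chords_cross U d e"
proof -
  obtain i k where "i \<le> n" "k \<le> n" "d \<in> path_edges (lam n U D x i)" "e \<in> path_edges (lam n U D x k)"
    using assms(2,3) unfolding lam_edges_def by blast
  moreover have "x ` {1..i} \<subseteq> x ` {1..k} \<or> x ` {1..k} \<subseteq> x ` {1..i}"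
    by (meson atLeastatMost_subset_iff image_mono nat_le_linear order_refl)
  ultimately show ?thesis
    using not_chords_cross_nested_paths lam_eq_path_vertices[OF assms(1)]
    by (metis prod.collapse)
qed

text \<open>Adding an upper vertex \<open>w\<close> lifts the path. If the chord stops being weakly above it, then
  \<open>w\<close> lies strictly under the chord, and one of the two new edges at \<open>w\<close> crosses it unless
  the chord was an edge of the old path.\<close>
lemma chord_weakly_above_insert:
  assumes weakly_above: "chord_weakly_above U D a b L" and "w \<in> U" "0 \<in> L" "n + 1 \<in> L"
  shows "chord_weakly_above U D a b (insert w L) \<or> (a, b) \<in> path_edges L \<or>
    (\<exists>e\<in>path_edges (insert w L). chords_cross U (a, b) e)"
proof (cases "a < w \<and> w < b")
  case False
  then show ?thesis using weakly_above by (auto simp: chord_weakly_above_def)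
next
  case True
  have inner: "\<And>c. c \<in> L \<Longrightarrow> a < c \<Longrightarrow> c < b \<Longrightarrow> c \<in> D" and "a \<in> L \<or> a \<in> U" "b \<in> L \<or> b \<in> U"
    using weakly_above unfolding chord_weakly_above_def by auto
  have "w \<notin> D" "w \<notin> L" using \<open>w \<in> U\<close> disjoint True inner by auto
  obtain p q where pq: "p < w" "w < q" "(p, q) \<in> path_edges (L - {w})"
    using obtain_path_edge_over[of L "n + 1" w] U_range[OF \<open>w \<in> U\<close>] assms by auto
  have edges: "(p, w) \<in> path_edges (insert w L)" "(w, q) \<in> path_edges (insert w L)"
    using path_edges_split_at[OF pq(3,1,2)] by auto
  have "p \<in> L" "q \<in> L" and gap: "\<And>c. c \<in> L \<Longrightarrow> c \<noteq> w \<Longrightarrow> \<not> (p < c \<and> c < q)"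
    using pq(3) unfolding path_edges_iff by auto
  consider "a < p" | "p < a" | "p = a" "q < b" | "p = a" "b < q" | "p = a" "q = b"
    by linarith
  then have "chords_cross U (a, b) (p, w) \<or> chords_cross U (a, b) (w, q) \<or> (a, b) \<in> path_edges L"
  proof cases
    case 1
    then have "p \<notin> U" using inner[OF \<open>p \<in> L\<close>] pq True disjoint by auto
    then show ?thesis using 1 pq True \<open>w \<in> U\<close> by (simp add: chords_cross_def cross_pattern_def)
  next
    case 2
    then have "a \<in> U" using gap[of a] \<open>a \<in> L \<or> a \<in> U\<close> True pq by auto
    then show ?thesis using 2 pq True \<open>w \<in> U\<close> by (simp add: chords_cross_def cross_pattern_def)
  next
    case 3
    then have "q \<notin> U" using inner[OF \<open>q \<in> L\<close>] pq True disjoint by auto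
    then show ?thesis using 3 pq True \<open>w \<in> U\<close> by (simp add: chords_cross_def cross_pattern_def)
  next
    case 4
    then have "b \<in> U" using gap[of b] \<open>b \<in> L \<or> b \<in> U\<close> True pq by auto
    then show ?thesis using 4 pq True \<open>w \<in> U\<close> by (simp add: chords_cross_def cross_pattern_def)
  next
    case 5
    then show ?thesis using pq(3) \<open>w \<notin> L\<close> by simp
  qed
  then show ?thesis using edges by blast
qed

text \<open>Deleting a lower vertex \<open>w\<close> also lifts the path. If the chord stops being weakly above it,
  then \<open>w\<close> is an endpoint of the chord, and the new edge over \<open>w\<close> crosses it unless the chord
  was an edge of the old path.\<close>
lemma chord_weakly_above_remove:
  assumes weakly_above: "chord_weakly_above U D a b L" and "w \<in> D" "0 \<in> L" "n + 1 \<in> L" "a < b"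
  shows "chord_weakly_above U D a b (L - {w}) \<or> (a, b) \<in> path_edges L \<or>
    (\<exists>e\<in>path_edges (L - {w}). chords_cross U (a, b) e)"
proof (cases "w \<in> L \<and> (a = w \<or> b = w)")
  case False
  then show ?thesis using weakly_above by (auto simp: chord_weakly_above_def)
next
  case True
  have inner: "\<And>c. c \<in> L \<Longrightarrow> a < c \<Longrightarrow> c < b \<Longrightarrow> c \<in> D" and "a \<in> L \<or> a \<in> U" "b \<in> L \<or> b \<in> U"
    using weakly_above unfolding chord_weakly_above_def by auto
  have "w \<notin> U" using \<open>w \<in> D\<close> disjoint by auto
  obtain p q where pq: "p < w" "w < q" "(p, q) \<in> path_edges (L - {w})"
    using obtain_path_edge_over[of L "n + 1" w] D_range[OF \<open>w \<in> D\<close>] assms by auto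
  have "p \<in> L" "q \<in> L" and gap: "\<And>c. c \<in> L \<Longrightarrow> c \<noteq> w \<Longrightarrow> \<not> (p < c \<and> c < q)"
    using pq(3) unfolding path_edges_iff by auto
  consider "a = w" "q < b" | "a = w" "b < q" | "a = w" "q = b"
    | "b = w" "a < p" | "b = w" "p < a" | "b = w" "p = a"
    using True by linarith
  then have "chords_cross U (a, b) (p, q) \<or> (a, b) \<in> path_edges L"
  proof cases
    case 1
    then have "q \<notin> U" using inner[OF \<open>q \<in> L\<close>] pq disjoint by auto
    then show ?thesis using 1 pq \<open>w \<notin> U\<close> \<open>a < b\<close> by (simp add: chords_cross_def cross_pattern_def)
  next
    case 2
    then have "b \<in> U" using gap[of b] \<open>b \<in> L \<or> b \<in> U\<close> pq \<open>a < b\<close> by auto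
    then show ?thesis using 2 pq \<open>w \<notin> U\<close> \<open>a < b\<close> by (simp add: chords_cross_def cross_pattern_def)
  next
    case 4
    then have "p \<notin> U" using inner[OF \<open>p \<in> L\<close>] pq disjoint by auto
    then show ?thesis using 4 pq \<open>w \<notin> U\<close> \<open>a < b\<close> by (simp add: chords_cross_def cross_pattern_def)
  next
    case 5
    then have "a \<in> U" using gap[of a] \<open>a \<in> L \<or> a \<in> U\<close> pq \<open>a < b\<close> by auto
    then show ?thesis using 5 pq \<open>w \<notin> U\<close> \<open>a < b\<close> by (simp add: chords_cross_def cross_pattern_def)
  qed (use True pq gap \<open>p \<in> L\<close> \<open>q \<in> L\<close> in \<open>auto simp: path_edges_iff\<close>)
  then show ?thesis using pq(3) by blast
qed

lemma chord_weakly_above_upper_boundary: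
  assumes "chord_weakly_above U D a b ({0, n + 1} \<union> U)" "a < b"
  shows "(a, b) \<in> path_edges ({0, n + 1} \<union> U)"
  using assms disjoint unfolding chord_weakly_above_def path_edges_iff by (auto dest: D_range)

lemma chord_weakly_above_lower_boundary:
  assumes "a < b" "b \<le> n + 1"
  shows "chord_weakly_above U D a b ({0, n + 1} \<union> D)"
  using assms vertex_cases[of a] vertex_cases[of b] unfolding chord_weakly_above_def by auto

lemma lam_Suc_cases:
  assumes "x permutes {1..n}" "i < n"
  obtains "x (Suc i) \<in> U" "lam n U D x (Suc i) = insert (x (Suc i)) (lam n U D x i)"
    | "x (Suc i) \<in> D" "lam n U D x (Suc i) = lam n U D x i - {x (Suc i)}"
proof -
  have "x (Suc i) \<in> U \<union> D"
    using permutes_in_image[OF assms(1), of "Suc i"] assms(2) partition by auto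
  then show ?thesis
  proof (cases "x (Suc i) \<in> D")
    case False
    then show ?thesis using that(1) \<open>x (Suc i) \<in> U \<union> D\<close> by simp
  qed (use that(2) in simp)
qed

lemma lam_edges_meet_chord_weakly_above:
  assumes "x permutes {1..n}" "i \<le> n" "a < b" "chord_weakly_above U D a b (lam n U D x i)"
  shows "(a, b) \<in> lam_edges n U D x \<or> (\<exists>e\<in>lam_edges n U D x. chords_cross U (a, b) e)"
  using assms(2,4)
proof (induction i rule: inc_induct)
  case base
  then have "(a, b) \<in> path_edges (lam n U D x n)"
    using chord_weakly_above_upper_boundary lam_last[OF assms(1)] assms(3) by simp
  then show ?case using path_edges_lam_subset by blast
next
  case (step i)
  have ends: "0 \<in> lam n U D x i" "n + 1 \<in> lam n U D x i"
    using lam_eq_path_vertices[OF assms(1)] step.hyps by (simp_all add: path_vertices_def)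
  have "chord_weakly_above U D a b (lam n U D x (Suc i)) \<or> (a, b) \<in> path_edges (lam n U D x i) \<or>
      (\<exists>e\<in>path_edges (lam n U D x (Suc i)). chords_cross U (a, b) e)"
    using assms(1) step.hyps(2)
  proof (cases rule: lam_Suc_cases)
    case 1
    then show ?thesis using chord_weakly_above_insert[OF step.prems _ ends] by simp
  next
    case 2
    then show ?thesis using chord_weakly_above_remove[OF step.prems _ ends assms(3)] by simp
  qed
  then show ?case
    using step.IH step.hyps path_edges_lam_subset[of i n U D x]
      path_edges_lam_subset[of "Suc i" n U D x]
    by auto
qed

lemma lam_edges_maximal:
  assumes "x permutes {1..n}" "a < b" "b \<le> n + 1" "(a, b) \<notin> lam_edges n U D x"
  shows "\<exists>e\<in>lam_edges n U D x. chords_cross U (a, b) e"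
  using lam_edges_meet_chord_weakly_above[OF assms(1) _ assms(2), of 0] assms(4)
    chord_weakly_above_lower_boundary[OF assms(2,3)] lam_first[of n U D x] by simp

lemma cross_pattern_swap_sides:
  assumes "b \<le> n + 1" "d \<le> n + 1"
  shows "cross_pattern D a b c d \<longleftrightarrow> cross_pattern U a b c d"
proof -
  have side: "z \<in> D \<longleftrightarrow> z \<notin> U" if "0 < z" "z \<le> n" for z
    using notin_U_iff_in_D that by auto
  have "(b \<in> D \<longleftrightarrow> c \<in> D) \<longleftrightarrow> (b \<in> U \<longleftrightarrow> c \<in> U)" if "a < c" "c < b" "b < d"
    using side[of b] side[of c] that assms by auto
  moreover have "(c \<in> D \<longleftrightarrow> d \<notin> D) \<longleftrightarrow> (c \<in> U \<longleftrightarrow> d \<notin> U)" if "a < c" "c < d" "d < b"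
    using side[of c] side[of d] that assms by auto
  ultimately show ?thesis unfolding cross_pattern_def by blast
qed

lemma chords_cross_swap_sides:
  "b \<le> n + 1 \<Longrightarrow> d \<le> n + 1 \<Longrightarrow> chords_cross D (a, b) (c, d) \<longleftrightarrow> chords_cross U (a, b) (c, d)"
  unfolding chords_cross_def using cross_pattern_swap_sides by simp

lemma chord_crossed_over_upper_vertex:
  assumes "a < b" "b \<le> n + 1" "c \<in> U" "a < c" "c < b" "(a, b) \<notin> path_edges ({0, n + 1} \<union> D)"
  shows "\<exists>c d. c < d \<and> d \<le> n + 1 \<and> chords_cross U (a, b) (c, d)"
proof (cases "\<exists>e\<in>D. a < e \<and> e < b")
  case True
  then obtain e where "e \<in> D" "a < e" "e < b" by blast
  then have "chords_cross U (a, b) (min c e, max c e)" "min c e < max c e" "max c e \<le> n + 1"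
    using assms disjoint by (auto simp: chords_cross_def cross_pattern_def min_def max_def)
  then show ?thesis by blast
next
  case False
  then have "a \<in> U \<or> b \<in> U"
    using assms(1,2,6) vertex_cases[of a] vertex_cases[of b] unfolding path_edges_iff by auto
  then show ?thesis
  proof
    assume "a \<in> U"
    then have "chords_cross U (a, b) (0, c)"
      using assms U_range[of a] by (auto simp: chords_cross_def cross_pattern_def)
    then show ?thesis using assms(2,4,5) by (intro exI[of _ 0] exI[of _ c]) auto
  next
    assume "b \<in> U"
    then have "chords_cross U (a, b) (c, n + 1)"
      using assms U_range[of b] by (auto simp: chords_cross_def cross_pattern_def)
    then show ?thesis using assms(2,5) by (intro exI[of _ c] exI[of _ "n + 1"]) auto
  qed
qed

lemma no_inner_vertex_chord_joins_sides:
  assumes "a < b" "b \<le> n + 1" "(a, b) \<notin> boundary_edges n U D"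
    and "\<forall>c. a < c \<and> c < b \<longrightarrow> c \<notin> U \<and> c \<notin> D"
  shows "(a \<in> U \<and> b \<in> D) \<or> (a \<in> D \<and> b \<in> U)"
proof -
  have "(a, b) \<in> path_edges ({0, n + 1} \<union> W)"
    if "W = U \<or> W = D" "a \<in> {0, n + 1} \<union> W" "b \<in> {0, n + 1} \<union> W" for W
    using that assms(1,2,4) unfolding path_edges_iff by auto
  then have "a \<notin> {0, n + 1} \<union> U \<or> b \<notin> {0, n + 1} \<union> U" "a \<notin> {0, n + 1} \<union> D \<or> b \<notin> {0, n + 1} \<union> D"
    using assms(3) unfolding boundary_edges_def by blast+
  then show ?thesis
    using vertex_cases[of a] vertex_cases[of b] assms(1,2) disjoint by auto
qed

lemma chord_crossed_unless_boundary:
  assumes "a < b" "b \<le> n + 1" "(a, b) \<notin> boundary_edges n U D"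
  shows "\<exists>c d. c < d \<and> d \<le> n + 1 \<and> chords_cross U (a, b) (c, d)"
proof -
  interpret swapped: vertex_partition n D U
    using partition disjoint by unfold_locales auto
  consider (upper) c where "c \<in> U" "a < c" "c < b" | (lower) c where "c \<in> D" "a < c" "c < b"
    | (none) "\<forall>c. a < c \<and> c < b \<longrightarrow> c \<notin> U \<and> c \<notin> D"
    by blast
  then show ?thesis
  proof cases
    case upper
    then show ?thesis
      using chord_crossed_over_upper_vertex assms unfolding boundary_edges_def by blast
  next
    case lower
    have "(a, b) \<notin> path_edges ({0, n + 1} \<union> U)" using assms(3) unfolding boundary_edges_def by blast
    then obtain c' d where "c' < d" "d \<le> n + 1" "chords_cross D (a, b) (c', d)"
      using swapped.chord_crossed_over_upper_vertex[OF assms(1,2) lower] by blast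
    then show ?thesis using chords_cross_swap_sides assms(2) by blast
  next
    case none
    then have "(a \<in> U \<and> b \<in> D) \<or> (a \<in> D \<and> b \<in> U)"
      using no_inner_vertex_chord_joins_sides assms by blast
    then have "chords_cross U (a, b) (0, n + 1)"
      using assms(1,2) disjoint U_range[of a] U_range[of b] D_range[of a] D_range[of b]
      by (auto simp: chords_cross_def cross_pattern_def)
    then show ?thesis by auto
  qed
qed

end

context polygon
begin

lemma is_diagonal_if_crossed:
  assumes "a < b" "b \<le> n + 1" "c < d" "d \<le> n + 1" "chords_cross U (a, b) (c, d)"
  shows "is_diagonal n v (a, b)"
proof -
  have "diag_cross v (a, b) (c, d)" using diag_cross_iff_chords_cross assms by simp
  then obtain p where p: "p \<in> open_segment (v a) (v b)" "p \<in> open_segment (v c) (v d)"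
    unfolding diag_cross_def by auto
  have "\<not> closed_segment (v a) (v b) face_of convex hull (v ` {0..n+1})"
  proof
    assume face: "closed_segment (v a) (v b) face_of convex hull (v ` {0..n+1})"
    have "v c \<in> convex hull (v ` {0..n+1})" "v d \<in> convex hull (v ` {0..n+1})"
      using assms by (auto intro: hull_inc)
    then have "v c \<in> closed_segment (v a) (v b)"
      using face_ofD[OF face p(2)] p(1) open_closed_segment by blast
    then have "orient (v a) (v b) (v c) = 0" by (rule orient_closed_segment)
    then show False
      using orient_vertices_nonzero[of a b c] chords_cross_distinct_endpoints[OF assms(5)] assms
      by auto
  qed
  then show ?thesis unfolding is_diagonal_def using assms by auto
qed

lemma is_diagonal_unless_boundary:
  assumes "a < b" "b \<le> n + 1" "(a, b) \<notin> boundary_edges n U D"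
  shows "is_diagonal n v (a, b)"
  using chord_crossed_unless_boundary[OF assms] is_diagonal_if_crossed assms by blast

lemma eta_triangulation:
  assumes "x permutes {1..n}"
  shows "triangulation n v (eta n U D v x)"
  unfolding triangulation_def
proof (intro conjI ballI allI impI)
  fix d assume "d \<in> eta n U D v x"
  then show "is_diagonal n v d" unfolding eta_eq_lam_edges by auto
next
  fix d e assume "d \<in> eta n U D v x" "e \<in> eta n U D v x"
  moreover obtain a b c f where "d = (a, b)" "e = (c, f)" by fastforce
  ultimately have "(a, b) \<in> lam_edges n U D x" "(c, f) \<in> lam_edges n U D x"
    "d = (a, b)" "e = (c, f)"
    unfolding eta_eq_lam_edges by auto
  then show "\<not> diag_cross v d e"
    using lam_edges_not_cross[OF assms] lam_edges_chord[OF assms] diag_cross_iff_chords_cross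
    by auto
next
  fix d assume d: "is_diagonal n v d \<and> d \<notin> eta n U D v x"
  obtain a b where ab: "d = (a, b)" "a < b" "b \<le> n + 1"
    using d unfolding is_diagonal_def by auto
  then obtain e where e: "e \<in> lam_edges n U D x" "chords_cross U (a, b) e"
    using lam_edges_maximal[OF assms] d unfolding eta_eq_lam_edges by blast
  obtain c f where cf: "e = (c, f)" "c < f" "f \<le> n + 1"
    using e(1) lam_edges_chord[OF assms] by (cases e) auto
  have "is_diagonal n v e"
    using is_diagonal_if_crossed[of c f a b] e(2) cf ab by (simp add: chords_cross_commute)
  moreover have "diag_cross v d e" using diag_cross_iff_chords_cross e(2) ab cf by simp
  ultimately show "\<exists>e\<in>eta n U D v x. diag_cross v d e"
    using e(1) unfolding eta_eq_lam_edges by blast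
qed

end

section \<open>Covers in the weak order\<close>

lemma path_vertices_insert_other:
  "c \<noteq> w \<Longrightarrow> c \<in> path_vertices n U D (insert w Q) \<longleftrightarrow> c \<in> path_vertices n U D Q"
  unfolding path_vertices_def by auto

lemma path_edges_split_by_gap:
  assumes "(u, w) \<in> path_edges S" "\<alpha> < \<beta>"
    and "\<And>c. c \<noteq> \<alpha> \<Longrightarrow> c \<in> S \<longleftrightarrow> c \<in> S\<^sub>1" "\<And>c. c \<noteq> \<beta> \<Longrightarrow> c \<in> S \<longleftrightarrow> c \<in> S\<^sub>2"
  shows "(u, w) \<in> path_edges S\<^sub>1 \<or> (u, w) \<in> path_edges S\<^sub>2 \<or> (u \<le> \<alpha> \<and> \<beta> \<le> w)"
proof -
  consider "w < \<beta>" | "\<alpha> < u" | "u \<le> \<alpha> \<and> \<beta> \<le> w" by linarith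
  then show ?thesis
    by cases (use assms path_edges_cong[of u w S S\<^sub>2] path_edges_cong[of u w S S\<^sub>1] in auto)
qed

lemma mem_iff_endpoint_if_path_edge:
  "(u, w) \<in> path_edges S \<Longrightarrow> u \<le> c \<Longrightarrow> c \<le> w \<Longrightarrow> c \<in> S \<longleftrightarrow> c = u \<or> c = w"
  unfolding path_edges_iff by force

locale weak_cover_step = polygon +
  fixes x y :: "nat \<Rightarrow> nat" and j :: nat
  assumes x_permutes: "x permutes {1..n}" and y_permutes: "y permutes {1..n}"
    and j_range: "1 \<le> j" "j + 1 \<le> n" and ascent: "x j < x (j + 1)"
    and y_swap: "y = x(j := x (j + 1), j + 1 := x j)"
begin

abbreviation \<alpha> where "\<alpha> \<equiv> x j"
abbreviation \<beta> where "\<beta> \<equiv> x (j + 1)"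
abbreviation P where "P \<equiv> x ` {1..j - 1}"
abbreviation L where "L \<equiv> path_vertices n U D"

lemma x_swap: "x = y(j := y (j + 1), j + 1 := y j)"
  by (simp add: y_swap fun_eq_iff)

lemma image_y_eq_image_x: "(j \<in> A \<longleftrightarrow> j + 1 \<in> A) \<Longrightarrow> y ` A = x ` A"
proof -
  assume "j \<in> A \<longleftrightarrow> j + 1 \<in> A"
  moreover have "y = x \<circ> Transposition.transpose j (j + 1)"
    by (auto simp: y_swap Transposition.transpose_def)
  ultimately show ?thesis by (metis image_comp transpose_image_eq)
qed

lemma prefix_y_eq_prefix_x: "i \<noteq> j \<Longrightarrow> y ` {1..i} = x ` {1..i}"
  using j_range by (intro image_y_eq_image_x) auto

lemma y_at_ascent: "y j = \<beta>" "y (j + 1) = \<alpha>"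
  by (simp_all add: y_swap)

lemma ascent_range: "\<alpha> \<in> {1..n}" "\<beta> \<in> {1..n}"
  using permutes_in_image[OF x_permutes] j_range by auto

lemma ascent_notin_P: "\<alpha> \<notin> P" "\<beta> \<notin> P"
proof -
  have "{1..j - 1} \<subseteq> {1..n}" "j \<in> {1..n}" "j + 1 \<in> {1..n}" "j \<notin> {1..j - 1}" "j + 1 \<notin> {1..j - 1}"
    using j_range by auto
  then show "\<alpha> \<notin> P" "\<beta> \<notin> P"
    using inj_on_image_mem_iff[OF permutes_inj_on[OF x_permutes]] by blast+
qed

lemma prefixes_around_ascent:
  "x ` {1..j} = insert \<alpha> P" "y ` {1..j} = insert \<beta> P" "x ` {1..j + 1} = insert \<alpha> (insert \<beta> P)"
proof -
  have "{1..j} = insert j {1..j - 1}" "{1..j + 1} = insert (j + 1) (insert j {1..j - 1})"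
    using j_range by auto
  moreover have "y ` {1..j - 1} = P" using prefix_y_eq_prefix_x j_range by simp
  ultimately show "x ` {1..j} = insert \<alpha> P" "y ` {1..j} = insert \<beta> P"
    "x ` {1..j + 1} = insert \<alpha> (insert \<beta> P)"
    using y_at_ascent by auto
qed

lemma lam_y_eq_lam_x: "i \<le> n \<Longrightarrow> i \<noteq> j \<Longrightarrow> lam n U D y i = lam n U D x i"
  using lam_eq_path_vertices[OF x_permutes] lam_eq_path_vertices[OF y_permutes] prefix_y_eq_prefix_x
  by simp

lemma lam_at_ascent: "lam n U D x j = L (insert \<alpha> P)" "lam n U D y j = L (insert \<beta> P)"
  using lam_eq_path_vertices[OF x_permutes] lam_eq_path_vertices[OF y_permutes]
    prefixes_around_ascent
    j_range by simp_all

lemma alpha_in_prefix_of_y: "i \<le> n \<Longrightarrow> \<alpha> \<in> y ` {1..i} \<Longrightarrow> \<beta> \<in> y ` {1..i}"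
proof -
  assume "i \<le> n" "\<alpha> \<in> y ` {1..i}"
  then obtain k where "k \<in> {1..i}" "y k = y (j + 1)" using y_at_ascent by (metis imageE)
  then have "k = j + 1"
    using inj_onD[OF permutes_inj_on[OF y_permutes]] \<open>i \<le> n\<close> j_range by auto
  then have "j \<in> {1..i}" using \<open>k \<in> {1..i}\<close> j_range by auto
  then show "\<beta> \<in> y ` {1..i}" using y_at_ascent by (metis imageI)
qed

lemma beta_in_prefix_of_x: "i \<le> n \<Longrightarrow> \<beta> \<in> x ` {1..i} \<Longrightarrow> \<alpha> \<in> x ` {1..i}"
proof -
  assume "i \<le> n" "\<beta> \<in> x ` {1..i}"
  then obtain k where "k \<in> {1..i}" "x k = x (j + 1)" by auto
  then have "k = j + 1"
    using inj_onD[OF permutes_inj_on[OF x_permutes]] \<open>i \<le> n\<close> j_range by auto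
  then have "j \<in> {1..i}" using \<open>k \<in> {1..i}\<close> j_range by auto
  then show "\<alpha> \<in> x ` {1..i}" by (rule imageI)
qed

definition common_edges :: "(nat \<times> nat) set" where
  "common_edges = (\<Union>i \<in> {..n} - {j}. path_edges (lam n U D x i))"

lemma lam_edges_split:
  "lam_edges n U D x = common_edges \<union> path_edges (L (insert \<alpha> P))"
  "lam_edges n U D y = common_edges \<union> path_edges (L (insert \<beta> P))"
proof -
  have "{..n} = insert j ({..n} - {j})" using j_range by auto
  then have "lam_edges n U D z
      = (\<Union>i \<in> {..n} - {j}. path_edges (lam n U D z i)) \<union> path_edges (lam n U D z j)"
    for z
    unfolding lam_edges_def by (metis UN_insert sup_commute)
  then show "lam_edges n U D x = common_edges \<union> path_edges (L (insert \<alpha> P))"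
    "lam_edges n U D y = common_edges \<union> path_edges (L (insert \<beta> P))"
    unfolding common_edges_def using lam_at_ascent lam_y_eq_lam_x by auto
qed

lemma path_edges_subset_common_edges:
  "path_edges (L P) \<subseteq> common_edges" "path_edges (L (insert \<alpha> (insert \<beta> P))) \<subseteq> common_edges"
proof -
  have "lam n U D x (j - 1) = L P" "lam n U D x (j + 1) = L (insert \<alpha> (insert \<beta> P))"
    using lam_eq_path_vertices[OF x_permutes] prefixes_around_ascent j_range
    by (simp_all del: lam.simps)
  moreover have "j - 1 \<in> {..n} - {j}" "j + 1 \<in> {..n} - {j}" using j_range by auto
  ultimately show "path_edges (L P) \<subseteq> common_edges"
    "path_edges (L (insert \<alpha> (insert \<beta> P))) \<subseteq> common_edges"
    unfolding common_edges_def by (metis UN_upper)+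
qed

lemma path_edges_at_ascent_cases:
  assumes "(u, w) \<in> path_edges (L (insert \<alpha> P)) \<or> (u, w) \<in> path_edges (L (insert \<beta> P))"
  shows "(u, w) \<in> common_edges \<or> (u \<le> \<alpha> \<and> \<beta> \<le> w)"
proof -
  let ?L\<^sub>0 = "L P" and ?L\<^sub>2 = "L (insert \<alpha> (insert \<beta> P))"
  have \<alpha>_only: "\<And>c. c \<noteq> \<alpha> \<Longrightarrow> c \<in> L (insert \<alpha> P) \<longleftrightarrow> c \<in> ?L\<^sub>0"
      "\<And>c. c \<noteq> \<alpha> \<Longrightarrow> c \<in> L (insert \<beta> P) \<longleftrightarrow> c \<in> ?L\<^sub>2"
    by (simp_all add: path_vertices_insert_other)
  have \<beta>_only: "\<And>c. c \<noteq> \<beta> \<Longrightarrow> c \<in> L (insert \<alpha> P) \<longleftrightarrow> c \<in> ?L\<^sub>2"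
      "\<And>c. c \<noteq> \<beta> \<Longrightarrow> c \<in> L (insert \<beta> P) \<longleftrightarrow> c \<in> ?L\<^sub>0"
    using path_vertices_insert_other[where w = \<beta> and Q = "insert \<alpha> P"]
      path_vertices_insert_other[where w = \<beta> and Q = P]
    unfolding insert_commute[of \<alpha> \<beta>] by simp_all
  from assms have "(u, w) \<in> path_edges ?L\<^sub>0 \<or> (u, w) \<in> path_edges ?L\<^sub>2 \<or> (u \<le> \<alpha> \<and> \<beta> \<le> w)"
  proof
    assume "(u, w) \<in> path_edges (L (insert \<alpha> P))"
    from path_edges_split_by_gap[OF this ascent \<alpha>_only(1) \<beta>_only(1)] show ?thesis .
  next
    assume "(u, w) \<in> path_edges (L (insert \<beta> P))"
    from path_edges_split_by_gap[OF this ascent \<alpha>_only(2) \<beta>_only(2)] show ?thesis by blast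
  qed
  then show ?thesis using path_edges_subset_common_edges by blast
qed

lemma lam_edges_eq_if_gap_vertex:
  assumes "m \<in> L P" "\<alpha> < m" "m < \<beta>"
  shows "lam_edges n U D x = lam_edges n U D y"
proof -
  have "(u, w) \<in> common_edges" if "(u, w) \<in> path_edges (L (insert Q P))" "Q = \<alpha> \<or> Q = \<beta>" for u w Q
  proof -
    have "m \<in> L (insert Q P)" using assms that(2) path_vertices_insert_other by auto
    then have "\<not> (u \<le> \<alpha> \<and> \<beta> \<le> w)" using that(1) assms(2,3) unfolding path_edges_iff by auto
    then show ?thesis using path_edges_at_ascent_cases that by blast
  qed
  then show ?thesis unfolding lam_edges_split by auto
qed

lemma move_position:
  assumes "x = y(k := y (k + 1), k + 1 := y k)"
  shows "k = j"
proof -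
  have "x i = y i" if "i \<noteq> k" "i \<noteq> k + 1" for i
    using assms that by simp
  then have "j \<in> {k, k + 1}" "j + 1 \<in> {k, k + 1}"
    using ascent y_at_ascent by (metis insertCI less_irrefl)+
  then show "k = j" by auto
qed

lemma descent_in_y: "y (j + 1) < y j"
  using ascent y_at_ascent by simp

lemma move_231_iff: "move_231 n U y x \<longleftrightarrow> (\<exists>c\<in>P. \<alpha> < c \<and> c < \<beta> \<and> c \<in> U)"
proof
  assume "move_231 n U y x"
  then obtain k i where k: "x = y(k := y (k + 1), k + 1 := y k)"
    and i: "1 \<le> i" "i < k" "y (k + 1) < y i" "y i < y k" "y i \<in> U"
    unfolding move_231_def by blast
  have "k = j" using move_position[OF k] .
  then have "y i = x i" "x i \<in> P" using i y_swap by auto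
  then show "\<exists>c\<in>P. \<alpha> < c \<and> c < \<beta> \<and> c \<in> U" using i \<open>k = j\<close> y_at_ascent by auto
next
  assume "\<exists>c\<in>P. \<alpha> < c \<and> c < \<beta> \<and> c \<in> U"
  then obtain i where i: "i \<in> {1..j - 1}" "\<alpha> < x i" "x i < \<beta>" "x i \<in> U" by blast
  then have "1 \<le> i \<and> i < j \<and> y (j + 1) < y i \<and> y i < y j \<and> y i \<in> U"
    using y_swap by auto
  then show "move_231 n U y x"
    unfolding move_231_def using j_range descent_in_y x_swap by blast
qed

lemma move_312_iff: "move_312 n D y x \<longleftrightarrow> (\<exists>c. c \<notin> P \<and> \<alpha> < c \<and> c < \<beta> \<and> c \<in> D)"
proof
  assume "move_312 n D y x"
  then obtain k m where k: "x = y(k := y (k + 1), k + 1 := y k)"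
    and m: "k + 1 < m" "m \<le> n" "y (k + 1) < y m" "y m < y k" "y m \<in> D"
    unfolding move_312_def by blast
  have "k = j" using move_position[OF k] .
  then have "y m = x m" using m y_swap by auto
  moreover have "m \<in> {1..n}" "{1..j - 1} \<subseteq> {1..n}" "m \<notin> {1..j - 1}"
    using m \<open>k = j\<close> j_range by auto
  then have "x m \<notin> P" using inj_on_image_mem_iff[OF permutes_inj_on[OF x_permutes]] by blast
  ultimately show "\<exists>c. c \<notin> P \<and> \<alpha> < c \<and> c < \<beta> \<and> c \<in> D"
    using m \<open>k = j\<close> y_at_ascent by auto
next
  assume "\<exists>c. c \<notin> P \<and> \<alpha> < c \<and> c < \<beta> \<and> c \<in> D"
  then obtain c where c: "c \<notin> P" "\<alpha> < c" "c < \<beta>" "c \<in> D" by blast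
  then obtain m where m: "m \<in> {1..n}" "x m = c"
    using D_range permutes_image[OF x_permutes] by (metis atLeastAtMost_iff imageE)
  then have "j + 1 < m" using c by (cases "m < j \<or> m = j \<or> m = j + 1") auto
  then have "j + 1 < m \<and> m \<le> n \<and> y (j + 1) < y m \<and> y m < y j \<and> y m \<in> D"
    using m c y_swap by auto
  then show "move_312 n D y x"
    unfolding move_312_def using j_range descent_in_y x_swap by blast
qed

lemma moves_iff_gap_vertex:
  "move_231 n U y x \<or> move_312 n D y x \<longleftrightarrow> (\<exists>c\<in>L P. \<alpha> < c \<and> c < \<beta>)"
proof -
  have "c \<in> L P \<longleftrightarrow> (c \<in> P \<and> c \<in> U) \<or> (c \<notin> P \<and> c \<in> D)" if "\<alpha> < c" "c < \<beta>" for c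
    using mem_path_vertices[of c P] notin_U_iff_in_D[of c] ascent_range that by auto
  then show ?thesis unfolding move_231_iff move_312_iff by blast
qed

lemma ascent_membership:
  "\<alpha> \<in> L (insert \<alpha> P) \<longleftrightarrow> \<alpha> \<in> U" "\<beta> \<in> L (insert \<alpha> P) \<longleftrightarrow> \<beta> \<notin> U"
  "\<alpha> \<in> L (insert \<beta> P) \<longleftrightarrow> \<alpha> \<notin> U" "\<beta> \<in> L (insert \<beta> P) \<longleftrightarrow> \<beta> \<in> U"
  using mem_path_vertices ascent_range ascent_notin_P ascent by auto

end

locale gapless_cover_step = weak_cover_step +
  assumes no_gap_vertex: "c \<in> path_vertices n U D (x ` {1..j - 1}) \<Longrightarrow> \<not> (x j < c \<and> c < x (j + 1))"
begin

definition gap_lo :: nat where "gap_lo = Max {c \<in> L P. c < \<alpha>}"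

definition gap_hi :: nat where "gap_hi = Min {c \<in> L P. \<beta> < c}"

lemma gap_bounds: "gap_lo \<in> L P" "gap_lo < \<alpha>" "gap_hi \<in> L P" "\<beta> < gap_hi" "gap_hi \<le> n + 1"
  and gap_extremal: "\<And>c. c \<in> L P \<Longrightarrow> c < \<alpha> \<Longrightarrow> c \<le> gap_lo" "\<And>c. c \<in> L P \<Longrightarrow> \<beta> < c \<Longrightarrow> gap_hi \<le> c"
proof -
  have "finite (L P)" by (rule finite_subset[OF path_vertices_subset]) simp
  then have fin: "finite {c \<in> L P. c < \<alpha>}" "finite {c \<in> L P. \<beta> < c}"
    by (auto intro: finite_subset[OF _ \<open>finite (L P)\<close>])
  have "0 \<in> {c \<in> L P. c < \<alpha>}" "n + 1 \<in> {c \<in> L P. \<beta> < c}"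
    using ascent_range by (auto simp: path_vertices_def)
  then have "{c \<in> L P. c < \<alpha>} \<noteq> {}" "{c \<in> L P. \<beta> < c} \<noteq> {}" by blast+
  then have "gap_lo \<in> {c \<in> L P. c < \<alpha>}" "gap_hi \<in> {c \<in> L P. \<beta> < c}"
    unfolding gap_lo_def gap_hi_def using Max_in[OF fin(1)] Min_in[OF fin(2)] by blast+
  then show "gap_lo \<in> L P" "gap_lo < \<alpha>" "gap_hi \<in> L P" "\<beta> < gap_hi" "gap_hi \<le> n + 1"
    using path_vertices_subset[of P] by auto
  show "\<And>c. c \<in> L P \<Longrightarrow> c < \<alpha> \<Longrightarrow> c \<le> gap_lo" "\<And>c. c \<in> L P \<Longrightarrow> \<beta> < c \<Longrightarrow> gap_hi \<le> c"
    unfolding gap_lo_def gap_hi_def using Max_ge[OF fin(1)] Min_le[OF fin(2)] by auto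
qed

lemma gap_vertices:
  assumes "c \<in> L P" "gap_lo < c" "c < gap_hi"
  shows "c = \<alpha> \<or> c = \<beta>"
proof -
  have "\<not> c < \<alpha>" using gap_extremal(1)[OF assms(1)] assms(2) by auto
  moreover have "\<not> \<beta> < c" using gap_extremal(2)[OF assms(1)] assms(3) by auto
  moreover have "\<not> (\<alpha> < c \<and> c < \<beta>)" using no_gap_vertex assms(1) by blast
  ultimately show ?thesis by auto
qed

definition gap_edge :: "nat set \<Rightarrow> nat \<times> nat" where
  "gap_edge S = (if \<alpha> \<in> S then \<alpha> else gap_lo, if \<beta> \<in> S then \<beta> else gap_hi)"

lemma gap_edge_in_path_edges:
  assumes agree: "\<And>c. c \<noteq> \<alpha> \<Longrightarrow> c \<noteq> \<beta> \<Longrightarrow> c \<in> S \<longleftrightarrow> c \<in> L P"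
  shows "gap_edge S \<in> path_edges S"
proof -
  have "gap_lo \<in> S" "gap_hi \<in> S" using agree gap_bounds ascent by auto
  moreover have "\<not> (fst (gap_edge S) < c \<and> c < snd (gap_edge S))" if "c \<in> S" for c
  proof (cases "c = \<alpha> \<or> c = \<beta>")
    case True
    then show ?thesis using that unfolding gap_edge_def by auto
  next
    case False
    then have "c \<in> L P" using agree that by blast
    moreover have "gap_lo \<le> fst (gap_edge S)" "snd (gap_edge S) \<le> gap_hi"
      using gap_bounds ascent unfolding gap_edge_def by auto
    ultimately show ?thesis using gap_vertices[of c] False by (meson le_less_trans less_le_trans)
  qed
  ultimately show ?thesis
    using gap_bounds ascent unfolding gap_edge_def path_edges_def by auto
qed

lemma path_edge_over_gap:
  assumes agree: "\<And>c. c \<noteq> \<alpha> \<Longrightarrow> c \<noteq> \<beta> \<Longrightarrow> c \<in> S \<longleftrightarrow> c \<in> L P"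
    and edge: "(u, w) \<in> path_edges S" and "u \<le> \<alpha>" "\<beta> \<le> w"
  shows "(u, w) = gap_edge S"
proof -
  have between: "c \<in> S \<longleftrightarrow> c = u \<or> c = w" if "u \<le> c" "c \<le> w" for c
    using mem_iff_endpoint_if_path_edge[OF edge that] .
  have "u \<in> S" "w \<in> S" "u < w" using edge unfolding path_edges_iff by auto
  have "gap_lo \<in> S" "gap_hi \<in> S" using agree gap_bounds ascent by auto
  have "u = (if \<alpha> \<in> S then \<alpha> else gap_lo)"
  proof (cases "\<alpha> \<in> S")
    case False
    then have "u < \<alpha>" using \<open>u \<in> S\<close> \<open>u \<le> \<alpha>\<close> by (cases "u = \<alpha>") auto
    then have "u \<le> gap_lo" using agree[of u] \<open>u \<in> S\<close> gap_extremal ascent by auto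
    moreover have "\<not> u < gap_lo"
      using between[of gap_lo] \<open>gap_lo \<in> S\<close> gap_bounds \<open>\<beta> \<le> w\<close> ascent by auto
    ultimately show ?thesis using False by simp
  qed (use between[of \<alpha>] \<open>u \<le> \<alpha>\<close> \<open>\<beta> \<le> w\<close> ascent in auto)
  moreover have "w = (if \<beta> \<in> S then \<beta> else gap_hi)"
  proof (cases "\<beta> \<in> S")
    case False
    then have "\<beta> < w" using \<open>w \<in> S\<close> \<open>\<beta> \<le> w\<close> by (cases "w = \<beta>") auto
    then have "gap_hi \<le> w" using agree[of w] \<open>w \<in> S\<close> gap_extremal ascent by auto
    moreover have "\<not> gap_hi < w"
      using between[of gap_hi] \<open>gap_hi \<in> S\<close> gap_bounds \<open>u \<le> \<alpha>\<close> ascent by auto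
    ultimately show ?thesis using False by simp
  qed (use between[of \<beta>] \<open>u \<le> \<alpha>\<close> \<open>\<beta> \<le> w\<close> ascent in auto)
  ultimately show ?thesis unfolding gap_edge_def by simp
qed

lemma gap_edge_in_path_edges_ascent_agree:
  assumes "gap_edge S \<in> path_edges T"
  shows "\<alpha> \<in> T \<longleftrightarrow> \<alpha> \<in> S" "\<beta> \<in> T \<longleftrightarrow> \<beta> \<in> S"
proof -
  obtain u w where uw: "gap_edge S = (u, w)" by fastforce
  then have "u \<le> \<alpha>" "\<beta> \<le> w" "u = \<alpha> \<longleftrightarrow> \<alpha> \<in> S" "w = \<beta> \<longleftrightarrow> \<beta> \<in> S"
    using gap_bounds unfolding gap_edge_def by (auto split: if_splits)
  then show "\<alpha> \<in> T \<longleftrightarrow> \<alpha> \<in> S" "\<beta> \<in> T \<longleftrightarrow> \<beta> \<in> S"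
    using mem_iff_endpoint_if_path_edge[OF assms[unfolded uw]] ascent by auto
qed

abbreviation removed_edge where "removed_edge \<equiv> gap_edge (L (insert \<alpha> P))"
abbreviation added_edge where "added_edge \<equiv> gap_edge (L (insert \<beta> P))"

lemma path_vertices_at_ascent_agree:
  "c \<noteq> \<alpha> \<Longrightarrow> c \<noteq> \<beta> \<Longrightarrow> c \<in> L (insert \<alpha> P) \<longleftrightarrow> c \<in> L P"
  "c \<noteq> \<alpha> \<Longrightarrow> c \<noteq> \<beta> \<Longrightarrow> c \<in> L (insert \<beta> P) \<longleftrightarrow> c \<in> L P"
  by (simp_all add: path_vertices_insert_other)

lemma removed_edge_notin_lam_edges_y: "removed_edge \<notin> lam_edges n U D y"
proof
  assume "removed_edge \<in> lam_edges n U D y"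
  then obtain i where "i \<le> n" "removed_edge \<in> path_edges (L (y ` {1..i}))"
    unfolding lam_edges_def using lam_eq_path_vertices[OF y_permutes] by auto
  then have "\<alpha> \<in> L (y ` {1..i}) \<longleftrightarrow> \<alpha> \<in> U" "\<beta> \<in> L (y ` {1..i}) \<longleftrightarrow> \<beta> \<notin> U"
    using gap_edge_in_path_edges_ascent_agree ascent_membership by auto
  then have "\<alpha> \<in> y ` {1..i}" "\<beta> \<notin> y ` {1..i}"
    using mem_path_vertices ascent_range by auto
  then show False using alpha_in_prefix_of_y \<open>i \<le> n\<close> by blast
qed

lemma added_edge_notin_lam_edges_x: "added_edge \<notin> lam_edges n U D x"
proof
  assume "added_edge \<in> lam_edges n U D x"
  then obtain i where "i \<le> n" "added_edge \<in> path_edges (L (x ` {1..i}))"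
    unfolding lam_edges_def using lam_eq_path_vertices[OF x_permutes] by auto
  then have "\<alpha> \<in> L (x ` {1..i}) \<longleftrightarrow> \<alpha> \<notin> U" "\<beta> \<in> L (x ` {1..i}) \<longleftrightarrow> \<beta> \<in> U"
    using gap_edge_in_path_edges_ascent_agree ascent_membership by auto
  then have "\<alpha> \<notin> x ` {1..i}" "\<beta> \<in> x ` {1..i}"
    using mem_path_vertices ascent_range by auto
  then show False using beta_in_prefix_of_x \<open>i \<le> n\<close> by blast
qed

lemma lam_edges_exchange:
  "lam_edges n U D x - lam_edges n U D y = {removed_edge}"
  "lam_edges n U D y - lam_edges n U D x = {added_edge}"
proof -
  have "e = gap_edge (L (insert Q P))"
    if "e \<in> path_edges (L (insert Q P))" "e \<notin> common_edges" "Q = \<alpha> \<or> Q = \<beta>" for e Q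
  proof -
    obtain u w where "e = (u, w)" by fastforce
    then have "u \<le> \<alpha>" "\<beta> \<le> w" using path_edges_at_ascent_cases that by blast+
    then show ?thesis
      using path_edge_over_gap[of "L (insert Q P)" u w] path_vertices_at_ascent_agree that
        \<open>e = (u, w)\<close>
      by blast
  qed
  moreover have "removed_edge \<in> path_edges (L (insert \<alpha> P))"
    "added_edge \<in> path_edges (L (insert \<beta> P))"
    using gap_edge_in_path_edges path_vertices_at_ascent_agree by blast+
  ultimately show "lam_edges n U D x - lam_edges n U D y = {removed_edge}"
    "lam_edges n U D y - lam_edges n U D x = {added_edge}"
    using removed_edge_notin_lam_edges_y added_edge_notin_lam_edges_x unfolding lam_edges_split
    by blast+
qed

lemma exchanged_edges:
  "removed_edge = (if \<alpha> \<in> U then \<alpha> else gap_lo, if \<beta> \<in> U then gap_hi else \<beta>)"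
  "added_edge = (if \<alpha> \<in> U then gap_lo else \<alpha>, if \<beta> \<in> U then \<beta> else gap_hi)"
  unfolding gap_edge_def ascent_membership by simp_all

text \<open>The two edges are the diagonals of the quadrilateral \<open>gap_lo, \<alpha>, \<beta>, gap_hi\<close>.\<close>
lemma slope_removed_edge_less:
  "slope v removed_edge < slope v added_edge"
proof -
  have sides: "\<alpha> \<in> D \<longleftrightarrow> \<alpha> \<notin> U" "\<beta> \<in> D \<longleftrightarrow> \<beta> \<notin> U"
    using notin_U_iff_in_D ascent_range by auto
  have bounds: "gap_lo < \<alpha>" "\<alpha> < \<beta>" "\<beta> < gap_hi" "gap_hi \<le> n + 1"
    using gap_bounds ascent by auto
  consider "\<alpha> \<in> U" "\<beta> \<in> U" | "\<alpha> \<in> U" "\<beta> \<notin> U" | "\<alpha> \<notin> U" "\<beta> \<in> U" | "\<alpha> \<notin> U" "\<beta> \<notin> U"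
    by blast
  then show ?thesis
    unfolding exchanged_edges
    by cases (use bounds sides in \<open>auto simp: above_def intro!: slope_less_if_separated\<close>)
qed

end

lemma (in polygon) eta_diff_eq_lam_edges_diff:
  assumes "x permutes {1..n}" "y permutes {1..n}"
  shows "eta n U D v x - eta n U D v y = lam_edges n U D x - lam_edges n U D y"
proof -
  have "is_diagonal n v e" if "e \<in> lam_edges n U D x - lam_edges n U D y" for e
  proof -
    obtain a b where "e = (a, b)" by fastforce
    moreover have "e \<notin> boundary_edges n U D"
      using that boundary_edges_subset_lam_edges[OF assms(2)] by blast
    ultimately show ?thesis
      using that lam_edges_chord[OF assms(1)] is_diagonal_unless_boundary by blast
  qed
  then show ?thesis unfolding eta_eq_lam_edges by blast
qed

lemma diag_flip_if_exchange:
  assumes "triangulation n v T" "triangulation n v T'" "T - T' = {d}" "T' - T = {d'}"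
  shows "diag_flip n v T T'"
proof -
  have "d \<in> T" "d' \<notin> T" "d' \<in> T'" "T' = insert d' (T - {d})" using assms(3,4) by blast+
  moreover have "is_diagonal n v d'" "\<forall>e \<in> T - {d}. \<not> diag_cross v d' e"
    using assms(2,3) \<open>d' \<in> T'\<close> unfolding triangulation_def by blast+
  ultimately show ?thesis using assms(1) unfolding diag_flip_def by blast
qed

theorem proposition5p3:
  fixes n :: nat and U D :: "nat set" and v :: "nat \<Rightarrow> real \<times> real"
    and x y :: "nat \<Rightarrow> nat"
  assumes "U \<union> D = {1..n}" and "U \<inter> D = {}"
    and "polygon_Q n U D v"
    and "x permutes {1..n}" and "y permutes {1..n}"
    and "weak_cover n x y"
  shows "(eta n U D v x = eta n U D v y \<longleftrightarrow> move_231 n U y x \<or> move_312 n D y x) \<and>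
         (eta n U D v x \<noteq> eta n U D v y \<longrightarrow>
            diag_flip n v (eta n U D v x) (eta n U D v y) \<and>
            (\<exists>d d'. eta n U D v x - eta n U D v y = {d} \<and> eta n U D v y - eta n U D v x = {d'} \<and>
                    slope v d < slope v d'))"
proof -
  obtain j where j: "1 \<le> j" "j + 1 \<le> n" "x j < x (j + 1)" "y = x(j := x (j + 1), j + 1 := x j)"
    using assms(6) unfolding weak_cover_def by blast
  interpret weak_cover_step n U D v x y j
    using assms j by unfold_locales auto
  show ?thesis
  proof (cases "\<exists>c\<in>path_vertices n U D (x ` {1..j - 1}). x j < c \<and> c < x (j + 1)")
    case True
    then have "eta n U D v x = eta n U D v y"
      using lam_edges_eq_if_gap_vertex unfolding eta_eq_lam_edges by auto
    then show ?thesis using moves_iff_gap_vertex True by blast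
  next
    case False
    interpret gapless_cover_step n U D v x y j
      using False by unfold_locales blast
    have exchange: "eta n U D v x - eta n U D v y = {removed_edge}"
      "eta n U D v y - eta n U D v x = {added_edge}"
      using eta_diff_eq_lam_edges_diff lam_edges_exchange assms(4,5) by auto
    then have "diag_flip n v (eta n U D v x) (eta n U D v y)"
      using diag_flip_if_exchange eta_triangulation assms(4,5) by blast
    then show ?thesis using exchange slope_removed_edge_less moves_iff_gap_vertex False by auto
  qed
qed

end
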